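(* Let $I\subseteq\mathbb{R}$ be an interval and let $f,g\in C^2(I)$ with $g''(t)>0$ for all $t\in I$. For $a,b\in I$, $a\neq b$, put $$\Lambda_{f,g}(a,b)=\frac{f(a)+f(b)-2f\left(\frac{a+b}{2}\right)}{g(a)+g(b)-2g\left(\frac{a+b}{2}\right)}.$$ Then the inequality $\min\{a,b\}\le \Lambda_{f,g}(a,b)\le \max\{a,b\}$ holds for all $a,b\in I$ with $a\ne b$ if and only if $f''(t)=t\,g''(t)$ for every $t\in I$.
   Context: Since $g''>0$, the function $g$ is strictly convex on $I$, so the denominator $g(a)+g(b)-2g((a+b)/2)$ is strictly positive for $a\neq b$. *)

theory Defs
  imports "HOL-Analysis.Analysis"
begin

definition Lambda :: "(real \<Rightarrow> real) \<Rightarrow> (real \<Rightarrow> real) \<Rightarrow> real \<Rightarrow> real \<Rightarrow> real" where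
  "Lambda f g a b = (f a + f b - 2 * f ((a + b) / 2)) / (g a + g b - 2 * g ((a + b) / 2))"

text \<open>f is in C^2(I), with first derivative f1 and second derivative f2
  (one-sided at endpoints of I, i.e. derivatives taken within I).\<close>
definition C2_on :: "real set \<Rightarrow> (real \<Rightarrow> real) \<Rightarrow> (real \<Rightarrow> real) \<Rightarrow> (real \<Rightarrow> real) \<Rightarrow> bool" where
  "C2_on I f f1 f2 \<longleftrightarrow>
     (\<forall>t\<in>I. (f has_real_derivative f1 t) (at t within I)) \<and>
     (\<forall>t\<in>I. (f1 has_real_derivative f2 t) (at t within I)) \<and>
     continuous_on I f2"

end

theory Submission
  imports Defs
begin

(* Write  D u a b = u a + u b - 2 u((a+b)/2)  for the second difference, so that
   Lambda f g a b = D f a b / D g a b.  A double application of the mean value theorem gives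
   D u a b = k * u''(z) with k > 0 and a <= z <= b.  Since D g a b > 0, for a < b the bound
   a <= Lambda <= b says exactly that  D (f - a g) a b >= 0  and  D (f - b g) a b <= 0, and the
   mean value formula turns these into statements about the sign of  f''(z) - c g''(z).
   - If f'' = t g'' then f''(z) - c g''(z) = (z - c) g''(z), which is >= 0 for c = a and <= 0
     for c = b: the bounds hold.
   - If f''(t0) - t0 g''(t0) <> 0 for some t0, then by continuity f''(s) - c g''(s) has this
     same strict sign for all s, c near t0; on a short interval [a,b] of I near t0 both
     D (f - a g) a b and D (f - b g) a b then have this sign, contradicting the bounds. *)

definition second_diff :: "(real \<Rightarrow> real) \<Rightarrow> real \<Rightarrow> real \<Rightarrow> real" where
  "second_diff u a b = u a + u b - 2 * u ((a + b) / 2)"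

lemma Lambda_eq_second_diff: "Lambda f g a b = second_diff f a b / second_diff g a b"
  by (simp add: Lambda_def second_diff_def)

lemma Lambda_sym: "Lambda f g b a = Lambda f g a b"
  by (simp add: Lambda_def add.commute)

lemma mvt_within:
  fixes u u1 :: "real \<Rightarrow> real"
  assumes "x < y" and sub: "{x..y} \<subseteq> I"
    and deriv: "\<forall>t\<in>I. (u has_real_derivative u1 t) (at t within I)"
  shows "\<exists>z\<in>{x<..<y}. u y - u x = (y - x) * u1 z"
proof -
  have "\<exists>z\<in>{x<..<y}. u y - u x = u1 z * (y - x)"
  proof (rule mvt_simple[OF \<open>x < y\<close>])
    fix t assume "x \<le> t" "t \<le> y"
    then have "(u has_real_derivative u1 t) (at t within {x..y})"
      using deriv sub has_field_derivative_subset by fastforce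
    then show "(u has_derivative (*) (u1 t)) (at t within {x..y})"
      by (simp add: has_field_derivative_def)
  qed
  then show ?thesis by (auto simp: mult.commute)
qed

(* Apply the mean value theorem on both halves of [a,b], then to u'
   between the two intermediate points. *)
lemma second_diff_mean_value:
  fixes u u1 u2 :: "real \<Rightarrow> real"
  assumes "a < b" and sub: "{a..b} \<subseteq> I"
    and d1: "\<forall>t\<in>I. (u has_real_derivative u1 t) (at t within I)"
    and d2: "\<forall>t\<in>I. (u1 has_real_derivative u2 t) (at t within I)"
  shows "\<exists>z\<in>{a..b}. \<exists>k>0. second_diff u a b = k * u2 z"
proof -
  define m where "m = (a + b) / 2"
  have "a < m" "m < b" "b - m = m - a" using \<open>a < b\<close> by (auto simp: m_def field_simps)
  obtain x where x: "x \<in> {a<..<m}" and ex: "u m - u a = (m - a) * u1 x"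
    using mvt_within[OF \<open>a < m\<close> _ d1] sub \<open>m < b\<close> by force
  obtain y where y: "y \<in> {m<..<b}" and ey: "u b - u m = (m - a) * u1 y"
    using mvt_within[OF \<open>m < b\<close> _ d1] sub \<open>a < m\<close> \<open>b - m = m - a\<close> by force
  have "x < y" using x y by auto
  obtain z where z: "z \<in> {x<..<y}" and ez: "u1 y - u1 x = (y - x) * u2 z"
    using mvt_within[OF \<open>x < y\<close> _ d2] sub x y by force
  have "second_diff u a b = (m - a) * (u1 y - u1 x)"
    using ex ey by (simp add: second_diff_def m_def algebra_simps)
  also have "\<dots> = ((m - a) * (y - x)) * u2 z" using ez by simp
  finally have "second_diff u a b = ((m - a) * (y - x)) * u2 z" .
  moreover have "(m - a) * (y - x) > 0" using \<open>a < m\<close> \<open>x < y\<close> by simp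
  moreover have "z \<in> {a..b}" using z x y by auto
  ultimately show ?thesis by blast
qed

lemma C2_on_diff_scaled:
  assumes "C2_on I f f1 f2" and "C2_on I g g1 g2"
  shows "C2_on I (\<lambda>t. f t - c * g t) (\<lambda>t. f1 t - c * g1 t) (\<lambda>t. f2 t - c * g2 t)"
  using assms unfolding C2_on_def
  by (auto intro!: derivative_eq_intros continuous_intros)

lemma C2_second_diff_mean_value:
  assumes "C2_on I u u1 u2" and "a < b" and "{a..b} \<subseteq> I"
  shows "\<exists>z\<in>{a..b}. \<exists>k>0. second_diff u a b = k * u2 z"
  using assms second_diff_mean_value[of a b I u u1 u2] by (simp add: C2_on_def)

lemma second_diff_pos:
  assumes "C2_on I g g1 g2" and "\<forall>t\<in>I. g2 t > 0" and "a < b" and "{a..b} \<subseteq> I"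
  shows "second_diff g a b > 0"
  using C2_second_diff_mean_value[OF assms(1,3,4)] assms(2,4) by fastforce

lemma second_diff_diff_scaled:
  "second_diff (\<lambda>t. f t - c * g t) a b = second_diff f a b - c * second_diff g a b"
  by (simp add: second_diff_def algebra_simps)

lemma Lambda_lower_iff:
  assumes "second_diff g a b > 0"
  shows "c \<le> Lambda f g a b \<longleftrightarrow> 0 \<le> second_diff (\<lambda>t. f t - c * g t) a b"
  using assms by (simp add: Lambda_eq_second_diff second_diff_diff_scaled pos_le_divide_eq)

lemma Lambda_upper_iff:
  assumes "second_diff g a b > 0"
  shows "Lambda f g a b \<le> c \<longleftrightarrow> second_diff (\<lambda>t. f t - c * g t) a b \<le> 0"
  using assms by (simp add: Lambda_eq_second_diff second_diff_diff_scaled pos_divide_le_eq)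

lemma same_sign_if_close: "\<bar>x - y\<bar> < \<bar>y\<bar> \<Longrightarrow> x * y > (0::real)"
  by (cases "y > 0") (auto simp: abs_if zero_less_mult_iff split: if_splits)

(* Sign persistence: if F(t0) - t0 G(t0) <> 0 with F, G continuous, then F(s) - c G(s) has the
   same strict sign for all s in I and all c close enough to t0, since it differs from
   F(s) - t0 G(s) by (t0 - c) G(s) and G is bounded near t0. *)
lemma sign_persistence:
  fixes F G :: "real \<Rightarrow> real"
  assumes F: "continuous_on I F" and G: "continuous_on I G" and "t0 \<in> I"
    and h0: "F t0 - t0 * G t0 \<noteq> 0"
  shows "\<exists>\<delta>>0. \<forall>s\<in>I. \<forall>c. \<bar>s - t0\<bar> < \<delta> \<longrightarrow> \<bar>c - t0\<bar> < \<delta> \<longrightarrow>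
           (F s - c * G s) * (F t0 - t0 * G t0) > 0"
proof -
  define h where "h = F t0 - t0 * G t0"
  define e where "e = \<bar>h\<bar> / 2"
  define M where "M = \<bar>G t0\<bar> + 1"
  have "e > 0" "M > 0" using h0 by (auto simp: e_def h_def M_def)
  have "continuous_on I (\<lambda>s. F s - t0 * G s)" by (intro continuous_intros F G)
  then obtain d1 where "d1 > 0" and d1: "\<forall>s\<in>I. \<bar>s - t0\<bar> < d1 \<longrightarrow> \<bar>F s - t0 * G s - h\<bar> < e"
    using \<open>t0 \<in> I\<close> \<open>e > 0\<close> unfolding continuous_on_iff dist_real_def h_def by blast
  obtain d2 where "d2 > 0" and d2: "\<forall>s\<in>I. \<bar>s - t0\<bar> < d2 \<longrightarrow> \<bar>G s - G t0\<bar> < 1"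
    using G \<open>t0 \<in> I\<close> unfolding continuous_on_iff dist_real_def by (meson zero_less_one)
  define \<delta> where "\<delta> = min (min d1 d2) (e / M)"
  have "\<delta> > 0" using \<open>d1 > 0\<close> \<open>d2 > 0\<close> \<open>e > 0\<close> \<open>M > 0\<close> by (simp add: \<delta>_def)
  moreover have "(F s - c * G s) * h > 0"
    if "s \<in> I" "\<bar>s - t0\<bar> < \<delta>" "\<bar>c - t0\<bar> < \<delta>" for s c
  proof -
    have "\<bar>G s - G t0\<bar> < 1" using d2 that by (auto simp: \<delta>_def)
    then have "\<bar>G s\<bar> < M" unfolding M_def by linarith
    moreover have "\<bar>t0 - c\<bar> \<le> e / M" using that by (simp add: \<delta>_def abs_minus_commute)
    ultimately have "\<bar>t0 - c\<bar> * \<bar>G s\<bar> \<le> e / M * M" by (intro mult_mono) auto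
    then have "\<bar>(t0 - c) * G s\<bar> \<le> e" using \<open>M > 0\<close> by (simp add: abs_mult)
    moreover have "\<bar>F s - t0 * G s - h\<bar> < e" using d1 that by (auto simp: \<delta>_def)
    moreover have "\<bar>(F s - c * G s) - h\<bar> \<le> \<bar>F s - t0 * G s - h\<bar> + \<bar>(t0 - c) * G s\<bar>"
      using abs_triangle_ineq[of "F s - t0 * G s - h" "(t0 - c) * G s"]
      by (simp add: algebra_simps)
    ultimately have "\<bar>(F s - c * G s) - h\<bar> < \<bar>h\<bar>" unfolding e_def by linarith
    then show ?thesis by (rule same_sign_if_close)
  qed
  ultimately show ?thesis unfolding h_def by blast
qed

lemma short_subinterval:
  fixes I :: "real set"
  assumes "is_interval I" and "interior I \<noteq> {}" and "t0 \<in> I" and "\<delta> > 0"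
  shows "\<exists>a b. a < b \<and> {a..b} \<subseteq> I \<and> {a..b} \<subseteq> ball t0 \<delta>"
proof -
  have "t0 \<in> closure (interior I)"
    using assms convex_closure_interior closure_subset is_interval_convex_1 by blast
  then obtain x where "x \<in> interior I" "dist t0 x < \<delta>"
    using closure_approachableD \<open>\<delta> > 0\<close> by blast
  then have "x \<in> interior (I \<inter> ball t0 \<delta>)" by simp
  then obtain r where "r > 0" "cball x r \<subseteq> I \<inter> ball t0 \<delta>"
    using mem_interior_cball by blast
  then show ?thesis
    by (intro exI[of _ "x - r"] exI[of _ "x + r"]) (auto simp: cball_eq_atLeastAtMost)
qed

lemma Lambda_between_if_ode:
  assumes F: "C2_on I f f1 f2" and G: "C2_on I g g1 g2" and gpos: "\<forall>t\<in>I. g2 t > 0"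
    and ode: "\<forall>t\<in>I. f2 t = t * g2 t" and "a < b" and sub: "{a..b} \<subseteq> I"
  shows "a \<le> Lambda f g a b \<and> Lambda f g a b \<le> b"
proof -
  have D: "\<exists>z\<in>{a..b}. \<exists>k>0. second_diff (\<lambda>t. f t - c * g t) a b = k * ((z - c) * g2 z)" for c
  proof -
    obtain z k where "z \<in> {a..b}" "k > 0"
      and "second_diff (\<lambda>t. f t - c * g t) a b = k * (f2 z - c * g2 z)"
      using C2_second_diff_mean_value[OF C2_on_diff_scaled[OF F G] \<open>a < b\<close> sub] by blast
    moreover have "f2 z - c * g2 z = (z - c) * g2 z" using ode sub \<open>z \<in> {a..b}\<close>
      by (auto simp: algebra_simps)
    ultimately show ?thesis by auto
  qed
  obtain z k where z: "z \<in> {a..b}" "k > 0"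
    and "second_diff (\<lambda>t. f t - a * g t) a b = k * ((z - a) * g2 z)" using D by blast
  moreover have "g2 z > 0" using gpos sub z(1) by auto
  ultimately have lower: "0 \<le> second_diff (\<lambda>t. f t - a * g t) a b" by simp
  obtain z' k' where z': "z' \<in> {a..b}" "k' > 0"
    and "second_diff (\<lambda>t. f t - b * g t) a b = k' * ((z' - b) * g2 z')" using D by blast
  moreover have "g2 z' > 0" using gpos sub z'(1) by auto
  ultimately have upper: "second_diff (\<lambda>t. f t - b * g t) a b \<le> 0"
    by (simp add: mult_nonneg_nonpos mult_nonpos_nonneg)
  have "second_diff g a b > 0" using second_diff_pos[OF G gpos \<open>a < b\<close> sub] .
  then show ?thesis using lower upper by (simp add: Lambda_lower_iff Lambda_upper_iff)
qed

lemma ode_if_Lambda_between: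
  assumes "is_interval I" and "interior I \<noteq> {}"
    and F: "C2_on I f f1 f2" and G: "C2_on I g g1 g2" and gpos: "\<forall>t\<in>I. g2 t > 0"
    and between: "\<forall>a\<in>I. \<forall>b\<in>I. a < b \<longrightarrow> a \<le> Lambda f g a b \<and> Lambda f g a b \<le> b"
    and "t0 \<in> I"
  shows "f2 t0 = t0 * g2 t0"
proof (rule ccontr)
  define h0 where "h0 = f2 t0 - t0 * g2 t0"
  assume "f2 t0 \<noteq> t0 * g2 t0"
  then obtain \<delta> where "\<delta> > 0"
    and sign: "\<forall>s\<in>I. \<forall>c. \<bar>s - t0\<bar> < \<delta> \<longrightarrow> \<bar>c - t0\<bar> < \<delta> \<longrightarrow> (f2 s - c * g2 s) * h0 > 0"
    using sign_persistence[of I f2 g2 t0] F G \<open>t0 \<in> I\<close> by (auto simp: C2_on_def h0_def)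
  obtain a b where "a < b" and sub: "{a..b} \<subseteq> I" and near: "{a..b} \<subseteq> ball t0 \<delta>"
    using short_subinterval[OF assms(1,2) \<open>t0 \<in> I\<close> \<open>\<delta> > 0\<close>] by blast
  have signed: "second_diff (\<lambda>t. f t - c * g t) a b * h0 > 0" if "c \<in> {a..b}" for c
  proof -
    obtain z k where "z \<in> {a..b}" "k > 0"
      and D: "second_diff (\<lambda>t. f t - c * g t) a b = k * (f2 z - c * g2 z)"
      using C2_second_diff_mean_value[OF C2_on_diff_scaled[OF F G] \<open>a < b\<close> sub] by blast
    then have "(f2 z - c * g2 z) * h0 > 0"
      using sign sub near that by (auto simp: dist_real_def abs_minus_commute subset_iff)
    then show ?thesis using D \<open>k > 0\<close> by (simp add: mult.assoc)
  qed
  have "second_diff g a b > 0" using second_diff_pos[OF G gpos \<open>a < b\<close> sub] .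
  moreover have "a \<le> Lambda f g a b \<and> Lambda f g a b \<le> b"
    using between sub \<open>a < b\<close> by (simp add: subset_iff)
  ultimately have "0 \<le> second_diff (\<lambda>t. f t - a * g t) a b"
    and "second_diff (\<lambda>t. f t - b * g t) a b \<le> 0"
    by (simp_all add: Lambda_lower_iff Lambda_upper_iff)
  moreover have "second_diff (\<lambda>t. f t - a * g t) a b * h0 > 0"
    and "second_diff (\<lambda>t. f t - b * g t) a b * h0 > 0"
    using signed \<open>a < b\<close> by auto
  ultimately show False by (auto simp: zero_less_mult_iff)
qed

theorem theorem1:
  fixes I :: "real set" and f g f1 f2 g1 g2 :: "real \<Rightarrow> real"
  assumes "is_interval I" and "interior I \<noteq> {}"
    and "C2_on I f f1 f2" and "C2_on I g g1 g2"
    and "\<forall>t\<in>I. g2 t > 0"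
  shows "(\<forall>a\<in>I. \<forall>b\<in>I. a \<noteq> b \<longrightarrow>
            min a b \<le> Lambda f g a b \<and> Lambda f g a b \<le> max a b)
         \<longleftrightarrow> (\<forall>t\<in>I. f2 t = t * g2 t)"
proof
  assume bounds: "\<forall>a\<in>I. \<forall>b\<in>I. a \<noteq> b \<longrightarrow>
                    min a b \<le> Lambda f g a b \<and> Lambda f g a b \<le> max a b"
  have between: "\<forall>a\<in>I. \<forall>b\<in>I. a < b \<longrightarrow> a \<le> Lambda f g a b \<and> Lambda f g a b \<le> b"
  proof (intro ballI impI)
    fix a b assume "a \<in> I" "b \<in> I" "a < b"
    then show "a \<le> Lambda f g a b \<and> Lambda f g a b \<le> b"
      using bounds[rule_format, of a b] by (simp add: min_def max_def)
  qed
  show "\<forall>t\<in>I. f2 t = t * g2 t"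
  proof
    fix t assume "t \<in> I"
    then show "f2 t = t * g2 t" by (rule ode_if_Lambda_between[OF assms between])
  qed
next
  assume ode: "\<forall>t\<in>I. f2 t = t * g2 t"
  have ordered: "a \<le> Lambda f g a b \<and> Lambda f g a b \<le> b" if "a < b" "a \<in> I" "b \<in> I" for a b
  proof -
    have "{a..b} \<subseteq> I" using assms(1) that(2,3) unfolding is_interval_1
      by (blast intro: subsetI dest: atLeastAtMost_iff[THEN iffD1])
    then show ?thesis using Lambda_between_if_ode[OF assms(3-5) ode \<open>a < b\<close>] by blast
  qed
  show "\<forall>a\<in>I. \<forall>b\<in>I. a \<noteq> b \<longrightarrow> min a b \<le> Lambda f g a b \<and> Lambda f g a b \<le> max a b"
  proof (intro ballI impI)
    fix a b assume "a \<in> I" "b \<in> I" "a \<noteq> b"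
    then consider "a < b" | "b < a" by linarith
    then show "min a b \<le> Lambda f g a b \<and> Lambda f g a b \<le> max a b"
    proof cases
      case 1
      then show ?thesis using ordered[OF 1 \<open>a \<in> I\<close> \<open>b \<in> I\<close>] by simp
    next
      case 2
      then show ?thesis using ordered[OF 2 \<open>b \<in> I\<close> \<open>a \<in> I\<close>] Lambda_sym[of f g a b] by simp
    qed
  qed
qed

end
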